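(* Let $\Sigma^2=\{0,1\}^{\mathbb{N}}$ with the metric $d(x,y)=0$ if $x=y$ and $d(x,y)=\frac1k$ if $x\neq y$, where $k=\min\{n\ge 0\mid x_n\ne y_n\}+1$, and let $\sigma:\Sigma^2\to\Sigma^2$ be the shift $\sigma(x_0x_1x_2\cdots)=x_1x_2\cdots$. Let $X\subset\Sigma^2$ be a nonempty set with $\sigma(X)\subset X$, equipped with the restricted metric. If $\sigma|_X$ is accessible, then $\sigma^2|_X$ is accessible.
   Context: A continuous map $f$ of a metric space $(X,d)$ into itself is accessible if for every $\epsilon>0$ and all nonempty open sets $U,V\subset X$ there exist $x\in U$, $y\in V$ and $n\in\mathbb{Z}^+=\{1,2,\dots\}$ with $d(f^n(x),f^n(y))<\epsilon$. Here $\mathbb{N}=\{0,1,2,\dots\}$ and open sets are open in $X$. *)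

theory Defs
  imports Complex_Main
begin

type_synonym seq2 = "nat \<Rightarrow> bool"

definition sdist :: "seq2 \<Rightarrow> seq2 \<Rightarrow> real" where
  "sdist x y = (if x = y then 0 else 1 / real (Suc (LEAST n. x n \<noteq> y n)))"

definition shift :: "seq2 \<Rightarrow> seq2" where
  "shift x = (\<lambda>n. x (Suc n))"

definition open_in_sub :: "seq2 set \<Rightarrow> seq2 set \<Rightarrow> bool" where
  "open_in_sub X U \<longleftrightarrow> U \<subseteq> X \<and>
     (\<forall>x\<in>U. \<exists>r>0. \<forall>y\<in>X. sdist x y < r \<longrightarrow> y \<in> U)"

definition accessible_on :: "seq2 set \<Rightarrow> (seq2 \<Rightarrow> seq2) \<Rightarrow> bool" where
  "accessible_on X f \<longleftrightarrow>
     (\<forall>\<epsilon>>0. \<forall>U V. open_in_sub X U \<and> open_in_sub X V \<and> U \<noteq> {} \<and> V \<noteq> {} \<longrightarrow>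
        (\<exists>x\<in>U. \<exists>y\<in>V. \<exists>n::nat. n \<ge> 1 \<and> sdist ((f ^^ n) x) ((f ^^ n) y) < \<epsilon>))"

end

theory Submission
  imports Defs
begin

(* The shift at most doubles the distance: if x and y first differ at position k >= 1, then
   shift x and shift y first differ at k - 1, and 1/k <= 2/(k+1). Hence if d(f^n x, f^n y) < eps/2
   for some n >= 1, the even iterate f^(2m) with 2m = n or 2m = n + 1 brings x and y within eps. *)

lemma sdist_nonneg: "0 \<le> sdist x y"
  by (simp add: sdist_def)

lemma sdist_le_one: "sdist x y \<le> 1"
  by (simp add: sdist_def)

lemma sdist_first_difference:
  assumes "x k \<noteq> y k" and "\<forall>i<k. x i = y i"
  shows "sdist x y = 1 / real (Suc k)"
proof -
  have "(LEAST n. x n \<noteq> y n) = k"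
    using assms by (intro Least_equality) (auto simp: not_le[symmetric])
  with assms(1) show ?thesis
    by (auto simp: sdist_def)
qed

lemma first_difference_exists:
  fixes x y :: seq2
  assumes "x \<noteq> y"
  obtains k where "x k \<noteq> y k" and "\<forall>i<k. x i = y i"
  using assms exists_least_iff[of "\<lambda>n. x n \<noteq> y n"] by auto

lemma sdist_shift_le: "sdist (shift x) (shift y) \<le> 2 * sdist x y"
proof (cases "shift x = shift y")
  case True
  then show ?thesis
    using sdist_nonneg[of x y] by (simp add: sdist_def)
next
  case False
  then obtain k where k: "x (Suc k) \<noteq> y (Suc k)" "\<forall>i<k. x (Suc i) = y (Suc i)"
    by (rule first_difference_exists) (auto simp: shift_def)
  then have shift_dist: "sdist (shift x) (shift y) = 1 / real (Suc k)"
    by (intro sdist_first_difference) (auto simp: shift_def)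
  show ?thesis
  proof (cases "x 0 = y 0")
    case True
    with k have "\<forall>i<Suc k. x i = y i"
      by (auto simp: less_Suc_eq_0_disj)
    with k(1) have dist: "sdist x y = 1 / real (Suc (Suc k))"
      by (intro sdist_first_difference)
    show ?thesis
      unfolding shift_dist dist by (simp add: field_simps)
  next
    case False
    then have "sdist x y = 1"
      by (subst sdist_first_difference[of x 0 y]) auto
    with sdist_le_one[of "shift x" "shift y"] show ?thesis
      by simp
  qed
qed

lemma funpow_comp_self: "(f \<circ> f) ^^ m = f ^^ (2 * m)"
  by (induction m) (simp_all add: comp_assoc)

lemma accessible_on_comp_self:
  assumes lipschitz: "\<And>x y. sdist (f x) (f y) \<le> C * sdist x y"
    and "1 \<le> C"
    and accessible: "accessible_on X f"
  shows "accessible_on X (f \<circ> f)"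
  unfolding accessible_on_def
proof (intro allI impI)
  fix \<epsilon> :: real and U V
  assume "\<epsilon> > 0" and UV: "open_in_sub X U \<and> open_in_sub X V \<and> U \<noteq> {} \<and> V \<noteq> {}"
  with \<open>1 \<le> C\<close> have "\<epsilon> / C > 0"
    by simp
  with accessible UV obtain x y n where xy: "x \<in> U" "y \<in> V" "1 \<le> n"
    and close: "sdist ((f ^^ n) x) ((f ^^ n) y) < \<epsilon> / C"
    unfolding accessible_on_def by blast
  define m where "m = (n + 1) div 2"
  have "sdist (((f \<circ> f) ^^ m) x) (((f \<circ> f) ^^ m) y) < \<epsilon>"
  proof (cases "even n")
    case True
    then have "(f \<circ> f) ^^ m = f ^^ n"
      by (auto simp: m_def funpow_comp_self elim!: evenE)
    moreover have "\<epsilon> / C \<le> \<epsilon>"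
      using \<open>1 \<le> C\<close> \<open>\<epsilon> > 0\<close> by (simp add: divide_le_eq)
    ultimately show ?thesis
      using close by simp
  next
    case False
    then have "(f \<circ> f) ^^ m = f \<circ> f ^^ n"
      by (auto simp: m_def funpow_comp_self elim!: oddE)
    then have "sdist (((f \<circ> f) ^^ m) x) (((f \<circ> f) ^^ m) y) \<le> C * sdist ((f ^^ n) x) ((f ^^ n) y)"
      using lipschitz by simp
    also have "\<dots> < C * (\<epsilon> / C)"
      using close \<open>1 \<le> C\<close> by (intro mult_strict_left_mono) auto
    finally show ?thesis
      using \<open>1 \<le> C\<close> by simp
  qed
  moreover have "1 \<le> m"
    using xy(3) by (simp add: m_def)
  ultimately show "\<exists>x\<in>U. \<exists>y\<in>V. \<exists>m. 1 \<le> m \<and> sdist (((f \<circ> f) ^^ m) x) (((f \<circ> f) ^^ m) y) < \<epsilon>"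
    using xy by blast
qed

theorem lemma3p5:
  fixes X :: "seq2 set"
  assumes "X \<noteq> {}"
    and "shift ` X \<subseteq> X"
    and "accessible_on X shift"
  shows "accessible_on X (shift \<circ> shift)"
  by (rule accessible_on_comp_self[OF sdist_shift_le _ assms(3)]) simp

end
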